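(* Let $p>0$ and $q\in\mathbb{R}$. Then any two elements of $\mathcal{A}_{p,q}^{+} = \{A\in S(4,\mathbb{R}) : A\neq\pm\sqrt{p}\,J,\ \operatorname{Pf}(A) = p,\ \operatorname{s}(A) = q\}$ are equivalent under the action $\rho$, i.e. for any $A,B\in\mathcal{A}_{p,q}^{+}$ there is $P\in\operatorname{Sp}(4)$ with $B = P^TAP$.
   Context: $S(4,\mathbb{R})$ is the set of invertible skew-symmetric real $4\times4$ matrices; $J = \operatorname{diag}(J_0,J_0)$ with $J_0 = \begin{bmatrix} 0 & 1 \\ -1 & 0\end{bmatrix}$; $\operatorname{Sp}(4) = \{P : P^TJP = J\}$; $\rho(P,A) = P^TAP$. For $A = \begin{bmatrix} 0 & a & b & c \\ -a & 0 & d & e \\ -b & -d & 0 & f \\ -c & -e & -f & 0\end{bmatrix}$, $\operatorname{Pf}(A) = af-be+cd$ and $\operatorname{s}(A) = a+f$. *)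

theory Defs
  imports "HOL-Analysis.Analysis"
begin

type_synonym mat4 = "real ^ 4 ^ 4"

definition skew :: "mat4 \<Rightarrow> bool" where
  "skew A \<longleftrightarrow> transpose A = - A"

definition S4 :: "mat4 set" where
  "S4 = {A. skew A \<and> invertible A}"

definition J :: mat4 where
  "J = (\<chi> i j. if (i = 1 \<and> j = 2) \<or> (i = 3 \<and> j = 4) then 1
               else if (i = 2 \<and> j = 1) \<or> (i = 4 \<and> j = 3) then -1 else 0)"

definition Sp4 :: "mat4 set" where
  "Sp4 = {P. transpose P ** J ** P = J}"

definition rho :: "mat4 \<Rightarrow> mat4 \<Rightarrow> mat4" where
  "rho P A = transpose P ** A ** P"

definition Pf :: "mat4 \<Rightarrow> real" where
  "Pf A = A$1$2 * A$3$4 - A$1$3 * A$2$4 + A$1$4 * A$2$3"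

definition s :: "mat4 \<Rightarrow> real" where
  "s A = A$1$2 + A$3$4"

definition Apq_plus :: "real \<Rightarrow> real \<Rightarrow> mat4 set" where
  "Apq_plus p q = {A \<in> S4. A \<noteq> sqrt p *\<^sub>R J \<and> A \<noteq> - (sqrt p *\<^sub>R J) \<and> Pf A = p \<and> s A = q}"

end

theory Submission
  imports Defs
begin

(* Put M = -J A, so that J M = A. Then M is self-adjoint for the symplectic form
   omega(x, y) = x . J y and satisfies M^2 = s(A) M - Pf(A). Given v, w with omega(v, w) = 1 and
   omega(M v, w) = 0, the vectors v, w, M v, -M w / Pf(A) form a symplectic basis in which M acts
   by a matrix C depending only on Pf(A) and s(A), so A = J M is congruent under Sp(4) to J C.
   Such v, w exist as soon as M is not scalar, i.e. A is not a multiple of J; as Pf(c J) = c^2,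
   this is what excluding A = +-sqrt(p) J guarantees. *)

lemma vector_4 [simp]:
  "(vector [x1, x2, x3, x4] :: ('a::zero)^4) $ 1 = x1"
  "(vector [x1, x2, x3, x4] :: ('a::zero)^4) $ 2 = x2"
  "(vector [x1, x2, x3, x4] :: ('a::zero)^4) $ 3 = x3"
  "(vector [x1, x2, x3, x4] :: ('a::zero)^4) $ 4 = x4"
  unfolding vector_def by simp_all

lemma matrix_mult_transpose_nth: "(M ** transpose R) $ i $ j = (M *v R $ j) $ i"
  by (simp add: matrix_matrix_mult_def matrix_vector_mult_def transpose_def)

lemma J_nth [simp]:
  "J$1$1 = 0" "J$1$2 = 1" "J$1$3 = 0" "J$1$4 = 0"
  "J$2$1 = -1" "J$2$2 = 0" "J$2$3 = 0" "J$2$4 = 0"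
  "J$3$1 = 0" "J$3$2 = 0" "J$3$3 = 0" "J$3$4 = 1"
  "J$4$1 = 0" "J$4$2 = 0" "J$4$3 = -1" "J$4$4 = 0"
  by (simp_all add: J_def)

lemma skew_nth:
  assumes "skew A"
  shows "A$i$j = - A$j$i"
proof -
  have "transpose A $ j $ i = (- A) $ j $ i"
    using assms by (simp add: skew_def)
  then show ?thesis
    by (simp add: transpose_def)
qed

lemma skew_entries:
  assumes "skew A"
  shows "A$1$1 = 0" "A$2$2 = 0" "A$3$3 = 0" "A$4$4 = 0"
    and "A$2$1 = - A$1$2" "A$3$1 = - A$1$3" "A$4$1 = - A$1$4"
    and "A$3$2 = - A$2$3" "A$4$2 = - A$2$4" "A$4$3 = - A$3$4"
proof -
  have "A$i$i = 0" for i
    using skew_nth[OF assms, of i i] by simp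
  then show "A$1$1 = 0" "A$2$2 = 0" "A$3$3 = 0" "A$4$4 = 0"
    by simp_all
  show "A$2$1 = - A$1$2" "A$3$1 = - A$1$3" "A$4$1 = - A$1$4"
    and "A$3$2 = - A$2$3" "A$4$2 = - A$2$4" "A$4$3 = - A$3$4"
    by (rule skew_nth[OF assms])+
qed

lemma skew_J: "skew J"
  by (simp add: skew_def vec_eq_iff forall_4 transpose_def)

lemma inner_skew_matrix:
  assumes "skew K"
  shows "x \<bullet> (K *v y) = - (y \<bullet> (K *v x))"
proof -
  have "x \<bullet> (K *v y) = (transpose K *v x) \<bullet> y"
    by (simp add: dot_lmul_matrix)
  also have "\<dots> = - ((K *v x) \<bullet> y)"
    using assms by (simp add: skew_def vec_eq_iff matrix_vector_mult_def sum_negf inner_vec_def)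
  finally show ?thesis
    by (simp add: inner_commute)
qed

lemma neg_J_mult_J: "(- J) ** J = mat 1"
  by (simp add: vec_eq_iff forall_4 matrix_matrix_mult_def sum_4 mat_def)

lemma Sp4_iff_rho: "P \<in> Sp4 \<longleftrightarrow> rho P J = J"
  by (simp add: Sp4_def rho_def)

lemma rho_mult: "rho (P ** Q) A = rho Q (rho P A)"
  by (simp add: rho_def matrix_transpose_mul matrix_mul_assoc)

lemma rho_mat_1 [simp]: "rho (mat 1) A = A"
  by (simp add: rho_def)

lemma rho_transpose_nth: "rho (transpose R) X $ i $ j = R $ i \<bullet> (X *v R $ j)"
  by (simp add: rho_def matrix_matrix_mult_def transpose_def matrix_vector_mult_def inner_vec_def
      sum_4 algebra_simps)

lemma rho_intertwining:
  assumes "M ** P = P ** C"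
  shows "rho P (K ** M) = rho P K ** C"
proof -
  have "rho P (K ** M) = transpose P ** K ** (M ** P)"
    by (simp add: rho_def matrix_mul_assoc)
  then show ?thesis
    by (simp add: assms rho_def matrix_mul_assoc)
qed

lemma Sp4_mult: "P \<in> Sp4 \<Longrightarrow> Q \<in> Sp4 \<Longrightarrow> P ** Q \<in> Sp4"
  by (simp add: Sp4_iff_rho rho_mult)

definition sp_inverse :: "mat4 \<Rightarrow> mat4" where
  "sp_inverse P = (- J) ** transpose P ** J"

lemma sp_inverse_mult:
  assumes "P \<in> Sp4"
  shows "sp_inverse P ** P = mat 1"
proof -
  have "sp_inverse P ** P = (- J) ** (transpose P ** J ** P)"
    by (simp add: sp_inverse_def matrix_mul_assoc)
  also have "\<dots> = mat 1"
    using assms by (simp add: Sp4_def neg_J_mult_J)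
  finally show ?thesis .
qed

lemma mult_sp_inverse: "P \<in> Sp4 \<Longrightarrow> P ** sp_inverse P = mat 1"
  using sp_inverse_mult matrix_left_right_inverse by blast

lemma sp_inverse_in_Sp4:
  assumes "P \<in> Sp4"
  shows "sp_inverse P \<in> Sp4"
proof -
  have "rho (sp_inverse P) J = rho (P ** sp_inverse P) J"
    using assms by (simp add: Sp4_iff_rho rho_mult)
  then show ?thesis
    using assms by (simp add: Sp4_iff_rho mult_sp_inverse)
qed

definition sp_equivalent :: "mat4 \<Rightarrow> mat4 \<Rightarrow> bool" where
  "sp_equivalent A B \<longleftrightarrow> (\<exists>P \<in> Sp4. B = rho P A)"

lemma sp_equivalent_sym:
  assumes "sp_equivalent A B"
  shows "sp_equivalent B A"
proof -
  obtain P where P: "P \<in> Sp4" "B = rho P A"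
    using assms by (auto simp: sp_equivalent_def)
  then have "A = rho (sp_inverse P) B"
    by (simp add: rho_mult[symmetric] mult_sp_inverse)
  then show ?thesis
    using P sp_inverse_in_Sp4 by (auto simp: sp_equivalent_def)
qed

lemma sp_equivalent_trans:
  "sp_equivalent A B \<Longrightarrow> sp_equivalent B C \<Longrightarrow> sp_equivalent A C"
  unfolding sp_equivalent_def by (metis Sp4_mult rho_mult)

definition hamiltonian :: "mat4 \<Rightarrow> mat4" where
  "hamiltonian A = (- J) ** A"

lemma J_mult_hamiltonian: "J ** hamiltonian A = A"
  using neg_J_mult_J matrix_left_right_inverse
  by (metis hamiltonian_def matrix_mul_assoc matrix_mul_lid)

lemma hamiltonian_explicit:
  assumes "skew A"
  shows "hamiltonian A = vector [
    vector [A$1$2, 0, - A$2$3, - A$2$4],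
    vector [0, A$1$2, A$1$3, A$1$4],
    vector [A$1$4, A$2$4, A$3$4, 0],
    vector [- A$1$3, - A$2$3, 0, A$3$4]]"
  using skew_entries[OF assms]
  by (simp add: hamiltonian_def vec_eq_iff forall_4 matrix_matrix_mult_def sum_4)

lemma hamiltonian_quadratic:
  assumes "skew A"
  shows "hamiltonian A *v (hamiltonian A *v x) = s A *\<^sub>R (hamiltonian A *v x) - Pf A *\<^sub>R x"
  by (simp add: hamiltonian_explicit[OF assms] vec_eq_iff forall_4 matrix_vector_mult_def sum_4
      s_def Pf_def algebra_simps)

lemma hamiltonian_symplectic_selfadjoint:
  assumes "skew A"
  shows "(hamiltonian A *v x) \<bullet> (J *v y) = x \<bullet> (J *v (hamiltonian A *v y))"
proof -
  have JM: "z \<bullet> (J *v (hamiltonian A *v z')) = z \<bullet> (A *v z')" for z z'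
    by (simp add: matrix_vector_mul_assoc J_mult_hamiltonian)
  show ?thesis
    using inner_skew_matrix[OF skew_J, of "hamiltonian A *v x" y] JM[of y x] JM[of x y]
      inner_skew_matrix[OF assms, of x y] by simp
qed

definition companion :: "real \<Rightarrow> real \<Rightarrow> mat4" where
  "companion p q = vector [
    vector [0, 0, - p, 0],
    vector [0, 0, 0, 1],
    vector [1, 0, q, 0],
    vector [0, - p, 0, q]]"

definition adapted_basis :: "mat4 \<Rightarrow> real^4 \<Rightarrow> real^4 \<Rightarrow> mat4" where
  "adapted_basis A v w =
    transpose (vector [v, w, hamiltonian A *v v, (- 1 / Pf A) *\<^sub>R (hamiltonian A *v w)])"

lemma hamiltonian_mult_adapted_basis:
  assumes A: "skew A" and p: "Pf A \<noteq> 0"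
  shows "hamiltonian A ** adapted_basis A v w = adapted_basis A v w ** companion (Pf A) (s A)"
proof -
  define M where "M = hamiltonian A"
  define u where "u = (- 1 / Pf A) *\<^sub>R (M *v w)"
  have MM: "M *v (M *v x) = s A *\<^sub>R (M *v x) - Pf A *\<^sub>R x" for x
    unfolding M_def by (rule hamiltonian_quadratic[OF A])
  have "M *v w = (- Pf A) *\<^sub>R u"
    using p by (simp add: u_def)
  moreover have "M *v u = w + s A *\<^sub>R u"
    using p by (simp add: u_def MM matrix_vector_mult_scaleR linear_neg[OF matrix_vector_mul_linear]
        scaleR_diff_right)
  ultimately show ?thesis
    using MM[of v]
    unfolding adapted_basis_def M_def[symmetric] u_def[symmetric] vec_eq_iff
      matrix_mult_transpose_nth
    by (simp add: forall_4 matrix_matrix_mult_def transpose_def companion_def sum_4)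
qed

lemma adapted_basis_in_Sp4:
  assumes A: "skew A" and p: "Pf A \<noteq> 0"
    and vw: "v \<bullet> (J *v w) = 1" and Mvw: "(hamiltonian A *v v) \<bullet> (J *v w) = 0"
  shows "adapted_basis A v w \<in> Sp4"
proof -
  define M where "M = hamiltonian A"
  define u where "u = (- 1 / Pf A) *\<^sub>R (M *v w)"
  note neg = linear_neg[OF matrix_vector_mul_linear]
  have swap: "x \<bullet> (J *v y) = - (y \<bullet> (J *v x))" for x y
    by (rule inner_skew_matrix[OF skew_J])
  have self: "x \<bullet> (J *v x) = 0" for x
    using swap[of x x] by simp
  have adjoint: "(M *v x) \<bullet> (J *v y) = x \<bullet> (J *v (M *v y))" for x y
    unfolding M_def by (rule hamiltonian_symplectic_selfadjoint[OF A])
  have M_self: "x \<bullet> (J *v (M *v x)) = 0" for x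
    using adjoint[of x x] swap[of "M *v x" x] by simp
  have v_Mw: "v \<bullet> (J *v (M *v w)) = 0"
    using adjoint[of v w] Mvw by (simp add: M_def)
  have w_u: "w \<bullet> (J *v u) = 0" and v_u: "v \<bullet> (J *v u) = 0"
    using M_self[of w] v_Mw by (simp_all add: u_def matrix_vector_mult_scaleR neg)
  have Mv_u: "(M *v v) \<bullet> (J *v u) = 1"
    using adjoint[of v "M *v w"] hamiltonian_quadratic[OF A, of w] v_Mw vw p
    by (simp add: M_def u_def matrix_vector_mult_scaleR matrix_vector_mult_diff_distrib
        inner_diff_right neg)
  have "rho (adapted_basis A v w) J = J"
    using vw Mvw w_u v_u Mv_u M_self[of v] swap[of v w] swap[of w u] swap[of v u]
      swap[of "M *v v" u] swap[of w "M *v v"] swap[of v "M *v v"]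
    unfolding adapted_basis_def M_def[symmetric] u_def[symmetric]
    by (simp add: vec_eq_iff forall_4 rho_transpose_nth self)
  then show ?thesis
    by (simp add: Sp4_iff_rho)
qed

lemma sp_equivalent_companion_if_adapted:
  assumes "skew A" and "Pf A \<noteq> 0"
    and "v \<bullet> (J *v w) = 1" and "(hamiltonian A *v v) \<bullet> (J *v w) = 0"
  shows "sp_equivalent A (J ** companion (Pf A) (s A))"
proof -
  let ?P = "adapted_basis A v w"
  have "rho ?P A = rho ?P (J ** hamiltonian A)"
    by (simp add: J_mult_hamiltonian)
  also have "\<dots> = rho ?P J ** companion (Pf A) (s A)"
    by (rule rho_intertwining[OF hamiltonian_mult_adapted_basis[OF assms(1,2)]])
  also have "\<dots> = J ** companion (Pf A) (s A)"
    using adapted_basis_in_Sp4[OF assms] by (simp add: Sp4_iff_rho)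
  finally show ?thesis
    using adapted_basis_in_Sp4[OF assms] unfolding sp_equivalent_def by metis
qed

lemma exists_adapted_pair:
  assumes A: "skew A" and not_scalar: "\<And>c. A \<noteq> c *\<^sub>R J"
  shows "\<exists>v w. v \<bullet> (J *v w) = 1 \<and> (hamiltonian A *v v) \<bullet> (J *v w) = 0"
proof -
  let ?a = "A$1$2" and ?b = "A$1$3" and ?c = "A$1$4"
  let ?d = "A$2$3" and ?e = "A$2$4" and ?f = "A$3$4"
  note compute = hamiltonian_explicit[OF A] inner_vec_def matrix_vector_mult_def sum_4
  (* Once omega(v, w) = 1, the condition omega(M v, w) = 0 reads a + b w3 + c w4 = 0 for v = e1 and
     a + d w3 + e w4 = 0 for v = e2; if b = c = d = e = 0, then A = diag(a J0, f J0) with a ~= f. *)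
  consider "?b * ?b + ?c * ?c \<noteq> 0" | "?d * ?d + ?e * ?e \<noteq> 0"
    | "?b = 0" "?c = 0" "?d = 0" "?e = 0"
    by fastforce
  then show ?thesis
  proof cases
    case 1
    define n where "n = ?b * ?b + ?c * ?c"
    have "n \<noteq> 0"
      using 1 by (simp add: n_def)
    let ?v = "vector [1, 0, 0, 0]" and ?w = "vector [0, 1, - ?a * ?b / n, - ?a * ?c / n]"
    have "?v \<bullet> (J *v ?w) = 1"
      by (simp add: compute)
    moreover have "(hamiltonian A *v ?v) \<bullet> (J *v ?w) = 0"
      using \<open>n \<noteq> 0\<close> by (simp add: compute field_simps) (simp add: n_def algebra_simps)
    ultimately show ?thesis
      by blast
  next
    case 2
    define n where "n = ?d * ?d + ?e * ?e"
    have "n \<noteq> 0"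
      using 2 by (simp add: n_def)
    let ?v = "vector [0, 1, 0, 0]" and ?w = "vector [-1, 0, - ?a * ?d / n, - ?a * ?e / n]"
    have "?v \<bullet> (J *v ?w) = 1"
      by (simp add: compute)
    moreover have "(hamiltonian A *v ?v) \<bullet> (J *v ?w) = 0"
      using \<open>n \<noteq> 0\<close> by (simp add: compute field_simps) (simp add: n_def algebra_simps)
    ultimately show ?thesis
      by blast
  next
    case 3
    define n where "n = ?f - ?a"
    have "n \<noteq> 0"
      using not_scalar[of ?a] 3 skew_entries[OF A] by (auto simp: n_def vec_eq_iff forall_4)
    let ?v = "vector [1, 0, 1, 0]" and ?w = "vector [0, ?f / n, 0, - ?a / n]"
    have "?v \<bullet> (J *v ?w) = 1"
      using \<open>n \<noteq> 0\<close> by (simp add: compute field_simps) (simp add: n_def)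
    moreover have "(hamiltonian A *v ?v) \<bullet> (J *v ?w) = 0"
      using \<open>n \<noteq> 0\<close> 3 by (simp add: compute field_simps)
    ultimately show ?thesis
      by blast
  qed
qed

lemma Pf_scaleR_J: "Pf (c *\<^sub>R J) = c\<^sup>2"
  by (simp add: Pf_def power2_eq_square)

lemma Apq_plus_not_scalar:
  assumes "A \<in> Apq_plus p q"
  shows "A \<noteq> c *\<^sub>R J"
proof
  assume A: "A = c *\<^sub>R J"
  then have "c\<^sup>2 = p"
    using assms Pf_scaleR_J[of c] by (simp add: Apq_plus_def)
  then have "sqrt p = \<bar>c\<bar>"
    by (metis real_sqrt_abs)
  with A assms show False
    by (auto simp: Apq_plus_def abs_if split: if_splits)
qed

lemma sp_equivalent_companion:
  assumes "A \<in> Apq_plus p q" and "p > 0"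
  shows "sp_equivalent A (J ** companion p q)"
proof -
  have A: "skew A" "Pf A = p" "s A = q"
    using assms(1) by (auto simp: Apq_plus_def S4_def)
  obtain v w where "v \<bullet> (J *v w) = 1" "(hamiltonian A *v v) \<bullet> (J *v w) = 0"
    using exists_adapted_pair[OF A(1) Apq_plus_not_scalar[OF assms(1)]] by blast
  with A assms(2) show ?thesis
    using sp_equivalent_companion_if_adapted[of A v w] by simp
qed

theorem lemma4p3:
  fixes p q :: real
  assumes "p > 0"
  shows "\<forall>A \<in> Apq_plus p q. \<forall>B \<in> Apq_plus p q. \<exists>P \<in> Sp4. B = rho P A"
proof (intro ballI)
  fix A B
  assume "A \<in> Apq_plus p q" and "B \<in> Apq_plus p q"
  then have "sp_equivalent A (J ** companion p q)" and "sp_equivalent B (J ** companion p q)"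
    using sp_equivalent_companion assms by blast+
  then have "sp_equivalent A B"
    using sp_equivalent_sym sp_equivalent_trans by blast
  then show "\<exists>P \<in> Sp4. B = rho P A"
    by (simp add: sp_equivalent_def)
qed

end
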